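(* Let $n,p$ be positive integers and $d$ a positive integer with $d\leq e^{-3/2}(p-1)$ and $n-d-1\geq1$. Then $$\mathrm{EDKhi}\Big[d+1,\,n-d-1,\,\Big[\binom{p-1}{d}(d+1)^2\Big]^{-1}\Big]\geq d+1.$$
   Context: For integers $d,N\geq1$ and $x>0$, $\mathrm{DKhi}(d,N,x)=\mathbb P(F_{d+2,N}\geq x/(d+2))-\frac{x}{d}\mathbb P(F_{d,N+2}\geq\frac{N+2}{Nd}x)$, where $F_{d,N}$ is a Fisher random variable with $d$ and $N$ degrees of freedom; $x\mapsto\mathrm{DKhi}(d,N,x)$ is decreasing and $\mathrm{EDKhi}(d,N,\cdot)$ denotes its inverse function. *)

theory Defs
  imports "HOL-Probability.Probability"
begin

definition fisher_density :: "nat \<Rightarrow> nat \<Rightarrow> real \<Rightarrow> real" where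
  "fisher_density d1 d2 x =
     (if x > 0 then
        (real d1 / real d2) powr (real d1 / 2) * x powr (real d1 / 2 - 1)
        * (1 + real d1 * x / real d2) powr (- (real d1 + real d2) / 2)
        / Beta (real d1 / 2) (real d2 / 2)
      else 0)"

definition fisher_distr :: "nat \<Rightarrow> nat \<Rightarrow> real measure" where
  "fisher_distr d1 d2 = density lborel (\<lambda>x. ennreal (fisher_density d1 d2 x))"

definition fisher_tail :: "nat \<Rightarrow> nat \<Rightarrow> real \<Rightarrow> real" where
  "fisher_tail d1 d2 t = measure (fisher_distr d1 d2) {t..}"

definition DKhi :: "nat \<Rightarrow> nat \<Rightarrow> real \<Rightarrow> real" where
  "DKhi d N x = fisher_tail (d + 2) N (x / (real d + 2))
      - x / real d * fisher_tail d (N + 2) ((real N + 2) / (real N * real d) * x)"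

definition EDKhi :: "nat \<Rightarrow> nat \<Rightarrow> real \<Rightarrow> real" where
  "EDKhi d N y = (THE x. x > 0 \<and> DKhi d N x = y)"

end

theory Submission
  imports Defs
begin

text \<open>
  Substituting \<open>t = (d\<^sub>2/d\<^sub>1) w\<close> in the Fisher densities turns both tails in
  \<open>DKhi D N x\<close> into integrals of the beta-prime kernel
  \<open>k(w) = w powr (a - 1) * (1 + w) powr (-(a + b + 1))\<close>, \<open>a = D/2\<close>, \<open>b = N/2\<close>, and the
  identity \<open>b B(a+1,b) = a B(a,b+1)\<close> combines them into
  \<open>DKhi D N x = (\<integral>\<^sub>u\<^sup>\<infinity> (w - u) k(w) dw) / B(a+1,b)\<close> with \<open>u = x/N\<close>.
  This is continuous and strictly decreasing in \<open>x\<close> and tends to \<open>0\<close>, so \<open>EDKhi D N y \<ge> D\<close>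
  whenever \<open>0 < y \<le> DKhi D N D\<close>. Bounding the integral from below on \<open>[2u, \<infinity>)\<close> and
  \<open>B(a+1,b)\<close> from above by log-convexity of \<open>\<Gamma>\<close> gives \<open>DKhi D N D \<ge> exp(-3d/2)/4\<close> for
  \<open>D = d + 1\<close>, whereas \<open>binomial (p-1) d \<ge> ((p-1)/d)^d \<ge> exp(3d/2)\<close> by the hypothesis on \<open>d\<close>.
\<close>

lemma one_plus_powr_has_integral_tail:
  fixes v b :: real
  assumes v: "v \<ge> 0" and b: "b > 0"
  shows "((\<lambda>w. (1 + w) powr (- b - 1)) has_integral (1 + v) powr (- b) / b) {v..}"
proof (intro has_integral_to_inf integrable_continuous_interval continuous_intros)
  define F where "F x = - ((1 + x) powr (- b)) / b" for x :: real
  have "((\<lambda>x. (1 + x) powr (- b - 1)) has_integral (F y - F v)) {v..y}" if "y \<ge> v" for y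
  proof (intro fundamental_theorem_of_calculus that)
    fix x assume x: "x \<in> {v..y}"
    have "(1 + x) powr b > 0" using x v by auto
    then have "(F has_real_derivative (1 + x) powr (- b - 1)) (at x within {v..y})"
      unfolding F_def using x v b
      by (auto intro!: derivative_eq_intros simp: powr_diff powr_minus)
    then show "(F has_vector_derivative (1 + x) powr (- b - 1)) (at x within {v..y})"
      by (simp add: has_real_derivative_iff_has_vector_derivative)
  qed
  then have "\<forall>\<^sub>F y in at_top. integral {v..y} (\<lambda>x. (1 + x) powr (- b - 1)) = F y - F v"
    by (meson eventually_at_top_linorderI integral_unique)
  moreover have "((\<lambda>y. F y - F v) \<longlongrightarrow> - F v) at_top"
    using b unfolding F_def by real_asymp
  ultimately show "((\<lambda>y. integral {v..y} (\<lambda>x. (1 + x) powr (- b - 1)))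
      \<longlongrightarrow> (1 + v) powr (- b) / b) at_top"
    by (simp add: F_def filterlim_cong)
qed (use v in auto)

lemma set_integrable_one_plus_powr:
  fixes v b :: real
  assumes "v \<ge> 0" and "b > 0"
  shows "set_integrable lborel {v..} (\<lambda>w. (1 + w) powr (- b - 1))"
proof -
  have "(\<lambda>w. (1 + w) powr (- b - 1)) absolutely_integrable_on {v..}"
    using one_plus_powr_has_integral_tail[OF assms] assms
    by (subst absolutely_integrable_on_iff_nonneg) auto
  then show ?thesis
    unfolding set_integrable_def by (subst (asm) integrable_completion) auto
qed

lemma set_integral_one_plus_powr:
  fixes v b :: real
  assumes "v \<ge> 0" and "b > 0"
  shows "(LINT w:{v..}|lborel. (1 + w) powr (- b - 1)) = (1 + v) powr (- b) / b"
  using set_borel_integral_eq_integral[OF set_integrable_one_plus_powr[OF assms]]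
    one_plus_powr_has_integral_tail[OF assms]
  by (simp add: integral_unique)

lemma set_integrable_powr_mult_one_plus_powr:
  fixes p q u :: real
  assumes u: "u > 0" and p: "p \<ge> 0" and q: "q - p > 1"
  shows "set_integrable lborel {u..} (\<lambda>w. w powr p * (1 + w) powr (- q))"
proof -
  have int: "set_integrable lborel {u..} (\<lambda>w. (1 + w) powr (- (q - p - 1) - 1))"
    using set_integrable_one_plus_powr[of u "q - p - 1"] u q by auto
  show ?thesis
    unfolding set_integrable_def
  proof (rule Bochner_Integration.integrable_bound[OF int[unfolded set_integrable_def]])
    show "(\<lambda>x. indicat_real {u..} x *\<^sub>R (x powr p * (1 + x) powr - q)) \<in> borel_measurable lborel"
      by measurable
    show "AE x in lborel. norm (indicat_real {u..} x *\<^sub>R (x powr p * (1 + x) powr - q))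
           \<le> norm (indicat_real {u..} x *\<^sub>R (1 + x) powr (- (q - p - 1) - 1))"
    proof (rule AE_I2)
      fix x :: real
      show "norm (indicat_real {u..} x *\<^sub>R (x powr p * (1 + x) powr - q))
           \<le> norm (indicat_real {u..} x *\<^sub>R (1 + x) powr (- (q - p - 1) - 1))"
      proof (cases "x \<ge> u")
        case True
        then have x: "x > 0" using u by auto
        have "x powr p * (1 + x) powr - q \<le> (1 + x) powr p * (1 + x) powr - q"
          using x p by (intro mult_right_mono powr_mono2) auto
        also have "\<dots> = (1 + x) powr (- (q - p))" using x by (simp add: powr_add[symmetric])
        finally show ?thesis using True x by (auto simp: indicator_def)
      qed (auto simp: indicator_def)
    qed
  qed
qed

lemma Beta_real_pos: "a > 0 \<Longrightarrow> b > 0 \<Longrightarrow> Beta a b > (0::real)"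
  unfolding Beta_def by auto

lemma Beta_real_shift:
  fixes a b :: real
  assumes "a > 0" "b > 0"
  shows "b * Beta (a + 1) b = a * Beta a (b + 1)"
proof -
  have "a \<notin> \<int>\<^sub>\<le>\<^sub>0" "b \<notin> \<int>\<^sub>\<le>\<^sub>0" using assms by (auto elim!: nonpos_Ints_cases)
  then have "(a + b) * (b * Beta (a + 1) b) = (a + b) * (a * Beta a (b + 1))"
    using Beta_plus1_left[of a b] Beta_plus1_right[of b a] by (simp add: algebra_simps)
  then show ?thesis using assms by simp
qed

lemma borel_measurable_fisher_density [measurable]: "fisher_density a b \<in> borel_measurable borel"
  unfolding fisher_density_def by measurable

lemma fisher_density_rescale:
  fixes a b :: nat and w :: real
  assumes "a \<ge> 1" and "b \<ge> 1" and w: "w > 0"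
  shows "fisher_density a b (real b / real a * w) =
     real a / real b * (w powr (real a / 2 - 1) * (1 + w) powr (- (real a + real b) / 2)
       / Beta (real a / 2) (real b / 2))"
proof -
  define A B where "A = real a" and "B = real b"
  have A: "A > 0" and B: "B > 0" using assms by (auto simp: A_def B_def)
  have "(B / A) powr e = (A / B) powr (- e)" for e
    using A B by (simp add: powr_minus powr_divide)
  then have "(A / B) powr (A / 2) * (B / A) powr (A / 2 - 1)
      = (A / B) powr (A / 2) * (A / B) powr (- (A / 2 - 1))"
    by simp
  also have "\<dots> = A / B" using A B by (simp flip: powr_add)
  finally have "(A / B) powr (A / 2) * (B / A) powr (A / 2 - 1) = A / B" .
  moreover have "(B / A * w) powr (A / 2 - 1) = (B / A) powr (A / 2 - 1) * w powr (A / 2 - 1)"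
    using powr_mult[of "B / A" w "A / 2 - 1"] A B w by simp
  moreover have "A * (B / A * w) / B = w" using A B by auto
  ultimately show ?thesis
    unfolding fisher_density_def A_def[symmetric] B_def[symmetric] using A B w
    by (simp add: mult_ac)
qed

lemma fisher_tail_eq_integral:
  fixes a b :: nat and s :: real
  assumes a: "a \<ge> 2" and b: "b \<ge> 1" and s: "s > 0"
  shows "fisher_tail a b s =
    (LINT w:{real a * s / real b..}|lborel. w powr (real a / 2 - 1) * (1 + w) powr (- (real a + real b) / 2))
      / Beta (real a / 2) (real b / 2)"
proof -
  define A B where "A = real a" and "B = real b"
  have A: "A \<ge> 2" and B: "B \<ge> 1" using a b by (auto simp: A_def B_def)
  define u where "u = A * s / B"
  have u: "u > 0" using A B s by (auto simp: u_def)
  define f where "f w = w powr (A / 2 - 1) * (1 + w) powr (- (A + B) / 2)" for w :: real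
  define c where "c = Beta (A / 2) (B / 2)"
  have c: "c > 0" unfolding c_def using A B by (intro Beta_real_pos) auto
  have "set_integrable lborel {u..} (\<lambda>w. w powr (A / 2 - 1) * (1 + w) powr (- ((A + B) / 2)))"
    by (rule set_integrable_powr_mult_one_plus_powr) (use u A B in auto)
  then have f_int: "set_integrable lborel {u..} f"
    unfolding f_def by (simp only: minus_divide_left)
  define h where "h w = indicator {u..} w * f w / c" for w
  have h_int: "integrable lborel h"
    using f_int unfolding h_def set_integrable_def by (auto intro: integrable_divide)
  have h_nonneg: "h w \<ge> 0" for w
    unfolding h_def f_def using c by (auto simp: indicator_def)
  have h_density: "ennreal (fisher_density a b (0 + B / A * w)) * indicator {s..} (0 + B / A * w)
      = ennreal (A / B) * ennreal (h w)" for w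
  proof (cases "w > 0")
    case True
    have "s \<le> B / A * w \<longleftrightarrow> u \<le> w" using A B unfolding u_def by (auto simp: field_simps)
    moreover have "fisher_density a b (B / A * w) = A / B * (f w / c)"
      using fisher_density_rescale[of a b w] a b True unfolding A_def B_def f_def c_def by simp
    ultimately show ?thesis using A B c h_nonneg unfolding h_def
      by (auto simp: indicator_def ennreal_mult[symmetric] f_def)
  next
    case False
    then have "B / A * w \<le> 0" using A B by (intro mult_nonneg_nonpos) auto
    then show ?thesis using False s u unfolding h_def by (auto simp: indicator_def)
  qed
  have "emeasure (fisher_distr a b) {s..}
      = (\<integral>\<^sup>+ t. ennreal (fisher_density a b t) * indicator {s..} t \<partial>lborel)"
    unfolding fisher_distr_def by (subst emeasure_density) auto
  also have "\<dots> = ennreal \<bar>B / A\<bar> *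
      (\<integral>\<^sup>+ w. ennreal (fisher_density a b (0 + B / A * w)) * indicator {s..} (0 + B / A * w) \<partial>lborel)"
    using A B by (intro nn_integral_real_affine) auto
  also have "\<dots> = ennreal (B / A) * ennreal (A / B) * (\<integral>\<^sup>+ w. ennreal (h w) \<partial>lborel)"
    unfolding h_density using A B by (subst nn_integral_cmult) (auto simp: h_def f_def mult.assoc)
  also have "ennreal (B / A) * ennreal (A / B) = 1"
    using A B by (simp add: ennreal_mult[symmetric])
  also have "(\<integral>\<^sup>+ w. ennreal (h w) \<partial>lborel) = ennreal (integral\<^sup>L lborel h)"
    using h_int h_nonneg by (intro nn_integral_eq_integral) auto
  finally have "fisher_tail a b s = integral\<^sup>L lborel h"
    unfolding fisher_tail_def measure_def using h_nonneg by simp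
  also have "\<dots> = (LINT w:{u..}|lborel. f w) / c"
    unfolding h_def set_lebesgue_integral_def by simp
  finally show ?thesis unfolding u_def f_def c_def A_def B_def .
qed

definition beta_prime_kernel :: "real \<Rightarrow> real \<Rightarrow> real \<Rightarrow> real" where
  "beta_prime_kernel a b w = w powr (a - 1) * (1 + w) powr (- (a + b + 1))"

definition kernel_tail :: "real \<Rightarrow> real \<Rightarrow> real \<Rightarrow> real" where
  "kernel_tail a b u = (LINT w:{u..}|lborel. beta_prime_kernel a b w)"

definition excess_integral :: "real \<Rightarrow> real \<Rightarrow> real \<Rightarrow> real" where
  "excess_integral a b u = (LINT w:{u..}|lborel. (w - u) * beta_prime_kernel a b w)"

lemma beta_prime_kernel_nonneg: "w > 0 \<Longrightarrow> beta_prime_kernel a b w \<ge> 0"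
  unfolding beta_prime_kernel_def by auto

lemma mult_beta_prime_kernel:
  "w > 0 \<Longrightarrow> w * beta_prime_kernel a b w = w powr a * (1 + w) powr (- (a + b + 1))"
  unfolding beta_prime_kernel_def by (simp add: powr_diff)

lemma mult_beta_prime_kernel_split:
  assumes w: "w > 0"
  shows "w * beta_prime_kernel a b w = (w / (1 + w)) powr a * (1 + w) powr (- b - 1)"
proof -
  have "- (a + b + 1) = (- b - 1) - a" by simp
  then have "(1 + w) powr (- (a + b + 1)) = (1 + w) powr (- b - 1) / (1 + w) powr a"
    by (metis powr_diff)
  then show ?thesis using mult_beta_prime_kernel[OF w] w by (simp add: powr_divide)
qed

context
  fixes a b :: real
  assumes a: "a \<ge> 1" and b: "b > 0"
begin

lemma set_integrable_beta_prime_kernel: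
  "u > 0 \<Longrightarrow> set_integrable lborel {u..} (beta_prime_kernel a b)"
  unfolding beta_prime_kernel_def
  by (rule set_integrable_powr_mult_one_plus_powr) (use a b in auto)

lemma set_integrable_mult_beta_prime_kernel:
  assumes u: "u > 0"
  shows "set_integrable lborel {u..} (\<lambda>w. w * beta_prime_kernel a b w)"
proof -
  have "set_integrable lborel {u..} (\<lambda>w. w powr a * (1 + w) powr (- (a + b + 1)))"
    by (rule set_integrable_powr_mult_one_plus_powr) (use a b u in auto)
  then show ?thesis
    by (rule set_integrable_cong[THEN iffD1, rotated -1]) (use u mult_beta_prime_kernel in auto)
qed

lemma excess_integral_eq:
  assumes "u > 0"
  shows "excess_integral a b u
    = (LINT w:{u..}|lborel. w * beta_prime_kernel a b w) - u * kernel_tail a b u"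
proof -
  have "excess_integral a b u
      = (LINT w:{u..}|lborel. w * beta_prime_kernel a b w - u * beta_prime_kernel a b w)"
    unfolding excess_integral_def by (simp add: left_diff_distrib)
  also have "\<dots> = (LINT w:{u..}|lborel. w * beta_prime_kernel a b w)
      - (LINT w:{u..}|lborel. u * beta_prime_kernel a b w)"
    using set_integrable_mult_beta_prime_kernel set_integrable_beta_prime_kernel assms
    by (intro set_integral_diff) (auto intro: set_integrable_mult_right)
  finally show ?thesis unfolding kernel_tail_def by simp
qed

lemma integrable_excess_integrand:
  assumes u: "u > 0"
  shows "integrable lborel (\<lambda>w. indicator {u..} w * ((w - u) * beta_prime_kernel a b w))"
proof -
  have "set_integrable lborel {u..}
      (\<lambda>w. w * beta_prime_kernel a b w - u * beta_prime_kernel a b w)"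
    using set_integrable_mult_beta_prime_kernel set_integrable_beta_prime_kernel u
    by (intro set_integral_diff set_integrable_mult_right) auto
  then show ?thesis unfolding set_integrable_def by (simp add: left_diff_distrib)
qed

lemma integrable_kernel_indicator:
  "u > 0 \<Longrightarrow> integrable lborel (\<lambda>w. indicator {u..} w * beta_prime_kernel a b w)"
  using set_integrable_beta_prime_kernel unfolding set_integrable_def by simp

lemma kernel_tail_antimono:
  assumes "u1 > 0" and "u1 \<le> u2"
  shows "kernel_tail a b u2 \<le> kernel_tail a b u1"
  unfolding kernel_tail_def set_lebesgue_integral_def
  using assms integrable_kernel_indicator[of u1] integrable_kernel_indicator[of u2]
  by (intro integral_mono) (auto simp: indicator_def beta_prime_kernel_nonneg)

lemma kernel_tail_pos:
  assumes u: "u > 0"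
  shows "kernel_tail a b u > 0"
proof -
  have "0 < u powr (a - 1) * ((1 + u) powr (- (a + b)) / (a + b))"
    using u a b by auto
  also have "\<dots> = (\<integral>w. u powr (a - 1) * (indicator {u..} w * (1 + w) powr (- (a + b) - 1)) \<partial>lborel)"
    using set_integral_one_plus_powr[of u "a + b"] u a b
    unfolding set_lebesgue_integral_def by simp
  also have "\<dots> \<le> (\<integral>w. indicator {u..} w * beta_prime_kernel a b w \<partial>lborel)"
  proof (rule integral_mono)
    show "integrable lborel (\<lambda>w. u powr (a - 1) * (indicator {u..} w * (1 + w) powr (- (a + b) - 1)))"
      using set_integrable_one_plus_powr[of u "a + b"] u a b
      unfolding set_integrable_def by auto
    show "integrable lborel (\<lambda>w. indicator {u..} w * beta_prime_kernel a b w)"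
      using integrable_kernel_indicator[OF u] .
    fix w :: real
    show "u powr (a - 1) * (indicator {u..} w * (1 + w) powr (- (a + b) - 1))
        \<le> indicator {u..} w * beta_prime_kernel a b w"
    proof (cases "w \<ge> u")
      case True
      then have "u powr (a - 1) \<le> w powr (a - 1)" using u a by (intro powr_mono2) auto
      then show ?thesis
        using True unfolding beta_prime_kernel_def by (auto simp: indicator_def intro!: mult_right_mono)
    qed (simp add: indicator_def)
  qed
  finally show ?thesis unfolding kernel_tail_def set_lebesgue_integral_def by simp
qed

text \<open>Moving the threshold from \<open>u1\<close> to \<open>u2\<close> changes \<open>(w - u)\<^sup>+\<close> by at most \<open>u2 - u1\<close>, and by
  exactly that amount on \<open>[u2, \<infinity>)\<close>.\<close>

lemma excess_integral_decrease_ge: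
  assumes u1: "u1 > 0" and u12: "u1 \<le> u2"
  shows "excess_integral a b u2 + (u2 - u1) * kernel_tail a b u2 \<le> excess_integral a b u1"
proof -
  have u2: "u2 > 0" using u1 u12 by auto
  have "excess_integral a b u2 + (u2 - u1) * kernel_tail a b u2 =
     (\<integral>w. indicator {u2..} w * ((w - u2) * beta_prime_kernel a b w)
        + (u2 - u1) * (indicator {u2..} w * beta_prime_kernel a b w) \<partial>lborel)"
    unfolding excess_integral_def kernel_tail_def set_lebesgue_integral_def
    using integrable_excess_integrand[OF u2] integrable_kernel_indicator[OF u2] by simp
  also have "\<dots> \<le> (\<integral>w. indicator {u1..} w * ((w - u1) * beta_prime_kernel a b w) \<partial>lborel)"
  proof (rule integral_mono)
    fix w :: real
    show "indicator {u2..} w * ((w - u2) * beta_prime_kernel a b w)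
          + (u2 - u1) * (indicator {u2..} w * beta_prime_kernel a b w)
        \<le> indicator {u1..} w * ((w - u1) * beta_prime_kernel a b w)"
      using u1 u12 beta_prime_kernel_nonneg[of w a b]
        mult_right_mono[of u1 w "beta_prime_kernel a b w"]
      by (auto simp: indicator_def algebra_simps)
  qed (use integrable_excess_integrand[OF u1] integrable_excess_integrand[OF u2]
        integrable_kernel_indicator[OF u2] in auto)
  finally show ?thesis unfolding excess_integral_def set_lebesgue_integral_def by simp
qed

lemma excess_integral_decrease_le:
  assumes u1: "u1 > 0" and u12: "u1 \<le> u2"
  shows "excess_integral a b u1 \<le> excess_integral a b u2 + (u2 - u1) * kernel_tail a b u1"
proof -
  have u2: "u2 > 0" using u1 u12 by auto
  have "excess_integral a b u1 = (\<integral>w. indicator {u1..} w * ((w - u1) * beta_prime_kernel a b w) \<partial>lborel)"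
    unfolding excess_integral_def set_lebesgue_integral_def by simp
  also have "\<dots> \<le> (\<integral>w. indicator {u2..} w * ((w - u2) * beta_prime_kernel a b w)
      + (u2 - u1) * (indicator {u1..} w * beta_prime_kernel a b w) \<partial>lborel)"
  proof (rule integral_mono)
    fix w :: real
    have "(w - u1) * beta_prime_kernel a b w \<le> (u2 - u1) * beta_prime_kernel a b w"
      if "u1 \<le> w" "w < u2"
      using that u1 beta_prime_kernel_nonneg[of w a b] by (intro mult_right_mono) auto
    then show "indicator {u1..} w * ((w - u1) * beta_prime_kernel a b w)
        \<le> indicator {u2..} w * ((w - u2) * beta_prime_kernel a b w)
          + (u2 - u1) * (indicator {u1..} w * beta_prime_kernel a b w)"
      using u12 by (auto simp: indicator_def algebra_simps)
  qed (use integrable_excess_integrand[OF u1] integrable_excess_integrand[OF u2]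
        integrable_kernel_indicator[OF u1] in auto)
  also have "\<dots> = excess_integral a b u2 + (u2 - u1) * kernel_tail a b u1"
    unfolding excess_integral_def kernel_tail_def set_lebesgue_integral_def
    using integrable_excess_integrand[OF u2] integrable_kernel_indicator[OF u1] by simp
  finally show ?thesis .
qed

lemma excess_integral_strict_antimono:
  assumes "u1 > 0" and "u1 < u2"
  shows "excess_integral a b u2 < excess_integral a b u1"
proof -
  have "(u2 - u1) * kernel_tail a b u2 > 0"
    using kernel_tail_pos[of u2] assms by (intro mult_pos_pos) auto
  then show ?thesis using excess_integral_decrease_ge[of u1 u2] assms by linarith
qed

lemma continuous_on_excess_integral:
  assumes c: "c > 0"
  shows "continuous_on {c..} (excess_integral a b)"
proof (rule lipschitz_on_continuous_on)
  have lipschitz: "\<bar>excess_integral a b x - excess_integral a b y\<bar> \<le> kernel_tail a b c * \<bar>x - y\<bar>"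
    if "c \<le> x" "x \<le> y" for x y
  proof -
    have "excess_integral a b x - excess_integral a b y \<le> (y - x) * kernel_tail a b x"
      using excess_integral_decrease_le[of x y] that c by auto
    also have "\<dots> \<le> (y - x) * kernel_tail a b c"
      using kernel_tail_antimono[of c x] that c by (intro mult_left_mono) auto
    finally show ?thesis
      using excess_integral_strict_antimono[of x y] that c
      by (cases "x = y") (auto simp: mult.commute)
  qed
  have "dist (excess_integral a b x) (excess_integral a b y) \<le> kernel_tail a b c * dist x y"
    if "x \<in> {c..}" "y \<in> {c..}" for x y
    using that lipschitz[of x y] lipschitz[of y x]
    by (cases "x \<le> y") (auto simp: dist_real_def abs_minus_commute)
  then show "(kernel_tail a b c)-lipschitz_on {c..} (excess_integral a b)"
    using kernel_tail_pos[OF c] by (intro lipschitz_onI) auto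
qed

lemma excess_integral_le:
  assumes u: "u > 0"
  shows "excess_integral a b u \<le> (1 + u) powr (- b) / b"
proof -
  have "excess_integral a b u
      = (\<integral>w. indicator {u..} w * ((w - u) * beta_prime_kernel a b w) \<partial>lborel)"
    unfolding excess_integral_def set_lebesgue_integral_def by simp
  also have "\<dots> \<le> (\<integral>w. indicator {u..} w * (1 + w) powr (- b - 1) \<partial>lborel)"
  proof (rule integral_mono)
    fix w :: real
    show "indicator {u..} w * ((w - u) * beta_prime_kernel a b w)
        \<le> indicator {u..} w * (1 + w) powr (- b - 1)"
    proof (cases "w \<ge> u")
      case True
      then have w: "w > 0" using u by auto
      have "(w - u) * beta_prime_kernel a b w \<le> w * beta_prime_kernel a b w"
        using u w beta_prime_kernel_nonneg[OF w] by (intro mult_right_mono) auto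
      also have "\<dots> = (w / (1 + w)) powr a * (1 + w) powr (- b - 1)"
        by (rule mult_beta_prime_kernel_split[OF w])
      also have "\<dots> \<le> 1 powr a * (1 + w) powr (- b - 1)"
        using w a by (intro mult_right_mono powr_mono2) auto
      finally show ?thesis using True by (simp add: indicator_def)
    qed (simp add: indicator_def)
  qed (use integrable_excess_integrand[OF u] set_integrable_one_plus_powr[of u b] u b
       in \<open>auto simp: set_integrable_def\<close>)
  also have "\<dots> = (1 + u) powr (- b) / b"
    using set_integral_one_plus_powr[of u b] u b unfolding set_lebesgue_integral_def by simp
  finally show ?thesis .
qed

text \<open>On \<open>[2u, \<infinity>)\<close> one has \<open>w - u \<ge> w/2\<close> and \<open>w/(1+w) \<ge> 2u/(1+2u)\<close>.\<close>

lemma excess_integral_ge: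
  assumes u: "u > 0"
  shows "(2 * u / (1 + 2 * u)) powr a * (1 + 2 * u) powr (- b) / (2 * b) \<le> excess_integral a b u"
proof -
  define c where "c = (2 * u / (1 + 2 * u)) powr a / 2"
  have "(2 * u / (1 + 2 * u)) powr a * (1 + 2 * u) powr (- b) / (2 * b)
      = c * (\<integral>w. indicator {2 * u..} w * (1 + w) powr (- b - 1) \<partial>lborel)"
    using set_integral_one_plus_powr[of "2 * u" b] u b
    unfolding c_def set_lebesgue_integral_def by simp
  also have "\<dots> = (\<integral>w. c * (indicator {2 * u..} w * (1 + w) powr (- b - 1)) \<partial>lborel)" by simp
  also have "\<dots> \<le> (\<integral>w. indicator {u..} w * ((w - u) * beta_prime_kernel a b w) \<partial>lborel)"
  proof (rule integral_mono)
    fix w :: real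
    show "c * (indicator {2 * u..} w * (1 + w) powr (- b - 1))
        \<le> indicator {u..} w * ((w - u) * beta_prime_kernel a b w)"
    proof (cases "w \<ge> 2 * u")
      case True
      then have w: "w > 0" using u by auto
      have "c * (1 + w) powr (- b - 1) \<le> (w / (1 + w)) powr a / 2 * (1 + w) powr (- b - 1)"
        unfolding c_def
      proof (intro mult_right_mono divide_right_mono powr_mono2)
        show "2 * u / (1 + 2 * u) \<le> w / (1 + w)" using True u by (simp add: field_simps)
      qed (use a u in auto)
      also have "\<dots> = w * beta_prime_kernel a b w / 2"
        using mult_beta_prime_kernel_split[OF w] by simp
      also have "\<dots> \<le> (w - u) * beta_prime_kernel a b w"
        using True beta_prime_kernel_nonneg[OF w] mult_right_mono[of "2 * u" w "beta_prime_kernel a b w"]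
        by (simp add: algebra_simps)
      finally show ?thesis using True u by (simp add: indicator_def)
    next
      case False
      then show ?thesis
        using beta_prime_kernel_nonneg[of w a b] u by (auto simp: indicator_def)
    qed
  qed (use integrable_excess_integrand[OF u] set_integrable_one_plus_powr[of "2 * u" b] u b
       in \<open>auto simp: set_integrable_def\<close>)
  also have "\<dots> = excess_integral a b u"
    unfolding excess_integral_def set_lebesgue_integral_def by simp
  finally show ?thesis .
qed

end

lemma DKhi_first_tail_eq:
  fixes D N :: nat and x :: real
  assumes D: "D \<ge> 2" and N: "N \<ge> 1" and x: "x > 0"
  shows "fisher_tail (D + 2) N (x / (real D + 2))
    = (LINT w:{x / real N..}|lborel. w * beta_prime_kernel (real D / 2) (real N / 2) w)
      / Beta (real D / 2 + 1) (real N / 2)"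
proof -
  have "real (D + 2) * (x / (real D + 2)) / real N = x / real N"
    by (simp add: add.commute)
  moreover have "Beta (real (D + 2) / 2) (real N / 2) = Beta (real D / 2 + 1) (real N / 2)"
    by (simp add: add_divide_distrib add.commute)
  ultimately have "fisher_tail (D + 2) N (x / (real D + 2))
      = (LINT w:{x / real N..}|lborel. w powr (real (D + 2) / 2 - 1)
          * (1 + w) powr (- (real (D + 2) + real N) / 2)) / Beta (real D / 2 + 1) (real N / 2)"
    using fisher_tail_eq_integral[of "D + 2" N "x / (real D + 2)"] D N x by simp
  also have "(LINT w:{x / real N..}|lborel. w powr (real (D + 2) / 2 - 1)
          * (1 + w) powr (- (real (D + 2) + real N) / 2))
      = (LINT w:{x / real N..}|lborel. w * beta_prime_kernel (real D / 2) (real N / 2) w)"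
  proof (intro set_lebesgue_integral_cong allI impI)
    fix w assume "w \<in> {x / real N..}"
    then have "w > 0" using x N by (auto intro: less_le_trans[of 0 "x / real N"])
    then show "w powr (real (D + 2) / 2 - 1) * (1 + w) powr (- (real (D + 2) + real N) / 2)
        = w * beta_prime_kernel (real D / 2) (real N / 2) w"
      using mult_beta_prime_kernel by (simp add: field_simps)
  qed auto
  finally show ?thesis .
qed

lemma DKhi_second_tail_eq:
  fixes D N :: nat and x :: real
  assumes D: "D \<ge> 2" and N: "N \<ge> 1" and x: "x > 0"
  shows "fisher_tail D (N + 2) ((real N + 2) / (real N * real D) * x)
    = kernel_tail (real D / 2) (real N / 2) (x / real N) / Beta (real D / 2) (real N / 2 + 1)"
proof -
  have "real D * ((real N + 2) / (real N * real D) * x) / real (N + 2)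
      = (real D * (real N + 2)) * x / ((real D * (real N + 2)) * real N)"
    by (simp add: field_simps)
  also have "\<dots> = x / real N"
    using D by (subst mult_divide_mult_cancel_left) auto
  finally have "real D * ((real N + 2) / (real N * real D) * x) / real (N + 2) = x / real N" .
  moreover have "Beta (real D / 2) (real (N + 2) / 2) = Beta (real D / 2) (real N / 2 + 1)"
    by (simp add: add_divide_distrib add.commute)
  moreover have "w powr (real D / 2 - 1) * (1 + w) powr (- (real D + real (N + 2)) / 2)
      = beta_prime_kernel (real D / 2) (real N / 2) w" for w
  proof -
    have "- (real D + real (N + 2)) / 2 = - (real D / 2 + real N / 2 + 1)" by simp
    then show ?thesis unfolding beta_prime_kernel_def by (simp only:)
  qed
  ultimately show ?thesis
    using fisher_tail_eq_integral[of D "N + 2" "(real N + 2) / (real N * real D) * x"] D N x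
    unfolding kernel_tail_def by simp
qed

lemma DKhi_eq_excess_integral:
  fixes D N :: nat and x :: real
  assumes D: "D \<ge> 2" and N: "N \<ge> 1" and x: "x > 0"
  shows "DKhi D N x
    = excess_integral (real D / 2) (real N / 2) (x / real N) / Beta (real D / 2 + 1) (real N / 2)"
proof -
  define a b u where "a = real D / 2" and "b = real N / 2" and "u = x / real N"
  have ab: "a \<ge> 1" "b > 0" and u: "u > 0" using D N x by (auto simp: a_def b_def u_def)
  have "b * Beta (a + 1) b = a * Beta a (b + 1)" using ab by (intro Beta_real_shift) auto
  then have "x / real D / Beta a (b + 1) = u / Beta (a + 1) b"
    using ab Beta_real_pos[of a "b + 1"] Beta_real_pos[of "a + 1" b]
    unfolding a_def b_def u_def by (auto simp: field_simps)
  then have "x / real D * (kernel_tail a b u / Beta a (b + 1)) = u * kernel_tail a b u / Beta (a + 1) b"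
    by (metis times_divide_eq_left times_divide_eq_right divide_divide_eq_left mult.commute)
  then have "DKhi D N x = ((LINT w:{u..}|lborel. w * beta_prime_kernel a b w)
      - u * kernel_tail a b u) / Beta (a + 1) b"
    unfolding DKhi_def DKhi_first_tail_eq[OF D N x] DKhi_second_tail_eq[OF D N x]
      a_def[symmetric] b_def[symmetric] u_def[symmetric]
    by (simp add: diff_divide_distrib)
  then show ?thesis
    using excess_integral_eq[OF ab u] unfolding a_def b_def u_def by simp
qed

lemma DKhi_strict_antimono:
  fixes D N :: nat
  assumes D: "D \<ge> 2" and N: "N \<ge> 1" and "0 < x" and "x < y"
  shows "DKhi D N y < DKhi D N x"
proof -
  have "excess_integral (real D / 2) (real N / 2) (y / real N)
      < excess_integral (real D / 2) (real N / 2) (x / real N)"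
    using assms by (intro excess_integral_strict_antimono) (auto simp: divide_strict_right_mono)
  moreover have "Beta (real D / 2 + 1) (real N / 2) > 0" using N by (intro Beta_real_pos) auto
  ultimately show ?thesis
    using assms by (simp add: DKhi_eq_excess_integral divide_strict_right_mono)
qed

lemma continuous_on_DKhi:
  fixes D N :: nat
  assumes D: "D \<ge> 2" and N: "N \<ge> 1" and c: "c > 0"
  shows "continuous_on {c..} (DKhi D N)"
proof -
  have "continuous_on {c / real N..} (excess_integral (real D / 2) (real N / 2))"
    using D N c by (intro continuous_on_excess_integral) auto
  moreover have "continuous_on {c..} (\<lambda>x. x / real N)"
    using N by (intro continuous_intros) auto
  moreover have "(\<lambda>x. x / real N) ` {c..} \<subseteq> {c / real N..}"
    by (auto intro: divide_right_mono)
  ultimately have "continuous_on {c..} (\<lambda>x. excess_integral (real D / 2) (real N / 2) (x / real N))"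
    by (rule continuous_on_compose2)
  then have cont: "continuous_on {c..} (\<lambda>x. excess_integral (real D / 2) (real N / 2) (x / real N)
      / Beta (real D / 2 + 1) (real N / 2))"
    using Beta_real_pos[of "real D / 2 + 1" "real N / 2"] N by (intro continuous_intros) auto
  have eq: "DKhi D N x = excess_integral (real D / 2) (real N / 2) (x / real N)
      / Beta (real D / 2 + 1) (real N / 2)" if "x \<in> {c..}" for x
    using that D N c by (intro DKhi_eq_excess_integral) auto
  show ?thesis
    by (rule continuous_on_cong[THEN iffD1, OF refl _ cont]) (simp add: eq)
qed

lemma eventually_DKhi_less:
  fixes D N :: nat
  assumes D: "D \<ge> 2" and N: "N \<ge> 1" and y: "y > 0"
  shows "\<forall>\<^sub>F x in at_top. DKhi D N x < y"
proof -
  define b B where "b = real N / 2" and "B = Beta (real D / 2 + 1) (real N / 2)"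
  have b: "b > 0" and B: "B > 0" using N unfolding b_def B_def by (auto intro: Beta_real_pos)
  have "((\<lambda>x. (1 + x / n) powr (- b) / c) \<longlongrightarrow> 0) at_top" if "n > 0" "c > 0" for n c :: real
    using that b by real_asymp
  then have "((\<lambda>x. (1 + x / real N) powr (- b) / (b * B)) \<longlongrightarrow> 0) at_top"
    using N b B by simp
  then have small: "\<forall>\<^sub>F x in at_top. (1 + x / real N) powr (- b) / (b * B) < y"
    using y by (rule order_tendstoD)
  have bound: "DKhi D N x \<le> (1 + x / real N) powr (- b) / (b * B)" if "x > 0" for x
  proof -
    have "excess_integral (real D / 2) b (x / real N) \<le> (1 + x / real N) powr (- b) / b"
      using D b that N by (intro excess_integral_le) auto
    then have "excess_integral (real D / 2) b (x / real N) / B \<le> (1 + x / real N) powr (- b) / b / B"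
      using B by (intro divide_right_mono) auto
    then show ?thesis
      using DKhi_eq_excess_integral[OF D N that] unfolding b_def B_def by simp
  qed
  show ?thesis
    using small eventually_gt_at_top[of 0] by eventually_elim (auto intro: order.strict_trans1[OF bound])
qed

lemma EDKhi_ge:
  fixes D N :: nat
  assumes D: "D \<ge> 2" and N: "N \<ge> 1" and x: "x > 0"
    and y: "y > 0" "y \<le> DKhi D N x"
  shows "x \<le> EDKhi D N y"
proof -
  obtain M where M: "\<And>X. X \<ge> M \<Longrightarrow> DKhi D N X < y"
    using eventually_DKhi_less[OF D N \<open>y > 0\<close>] by (auto simp: eventually_at_top_linorder)
  define X where "X = max x M"
  have X: "DKhi D N X \<le> y" "x \<le> X"
    using M[of X] unfolding X_def by auto
  have "continuous_on {x..X} (DKhi D N)"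
    using continuous_on_DKhi[OF D N x] by (rule continuous_on_subset) auto
  then obtain x0 where x0: "x \<le> x0" "DKhi D N x0 = y"
    using IVT2'[OF X(1) y(2) X(2)] by blast
  have "EDKhi D N y = x0"
    unfolding EDKhi_def
  proof (rule the_equality)
    show "0 < x0 \<and> DKhi D N x0 = y" using x x0 by auto
    fix x1 assume x1: "0 < x1 \<and> DKhi D N x1 = y"
    show "x1 = x0"
    proof (rule linorder_cases[of x1 x0])
      assume "x1 < x0"
      then show ?thesis using DKhi_strict_antimono[OF D N, of x1 x0] x1 x0 by simp
    next
      assume "x0 < x1"
      then show ?thesis using DKhi_strict_antimono[OF D N, of x0 x1] x x1 x0 by simp
    qed
  qed
  then show ?thesis using x0 by simp
qed

lemma ln_Gamma_real_plus1: "x > 0 \<Longrightarrow> ln (Gamma (x + 1)) = ln x + ln (Gamma x :: real)"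
proof -
  assume x: "x > 0"
  then have "x \<notin> \<int>\<^sub>\<le>\<^sub>0" by (auto elim!: nonpos_Ints_cases)
  then have "Gamma (x + 1) = x * Gamma x" by (rule Gamma_plus1)
  moreover have "Gamma x \<noteq> 0" using Gamma_real_pos[OF x] by linarith
  ultimately show ?thesis using x by (simp add: ln_mult)
qed

lemma Gamma_real_plus_ge:
  fixes b h :: real
  assumes b: "b > 0" and h: "h \<ge> 1"
  shows "b powr h * Gamma b \<le> Gamma (b + h)"
proof -
  have "(1 - 1 / h) *\<^sub>R b + (1 / h) *\<^sub>R (b + h) = b + 1" using h by (simp add: field_simps)
  then have "ln (Gamma (b + 1)) \<le> (1 - 1 / h) * ln (Gamma b) + (1 / h) * ln (Gamma (b + h))"
    using convex_onD[OF log_convex_Gamma_real, of "1 / h" b "b + h"] b h by simp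
  then have "h * ln b + ln (Gamma b) \<le> ln (Gamma (b + h))"
    using ln_Gamma_real_plus1[OF b] h by (simp add: field_simps)
  then have "exp (h * ln b + ln (Gamma b)) \<le> exp (ln (Gamma (b + h)))"
    by (simp only: exp_le_cancel_iff)
  then show ?thesis using b h by (simp add: exp_add powr_def)
qed

lemma Gamma_real_plus1_le_powr:
  fixes a :: real
  assumes a: "a \<ge> 1"
  shows "Gamma (a + 1) \<le> a powr a"
proof -
  define t where "t = (a - 1) / a"
  have t: "0 \<le> t" "t \<le> 1" using a by (auto simp: t_def field_simps)
  have "(1 - t) *\<^sub>R 1 + t *\<^sub>R (a + 1) = a" using a unfolding t_def by (simp add: field_simps)
  then have "ln (Gamma a) \<le> t * ln (Gamma (a + 1))"
    using convex_onD[OF log_convex_Gamma_real t, of 1 "a + 1"] a by simp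
  then have "ln (Gamma (a + 1)) \<le> a * ln a"
    using ln_Gamma_real_plus1[of a] a unfolding t_def by (simp add: field_simps)
  then have "exp (ln (Gamma (a + 1))) \<le> exp (a * ln a)"
    by (simp only: exp_le_cancel_iff)
  then show ?thesis using a by (simp add: powr_def)
qed

lemma Beta_real_plus1_le_inverse:
  fixes a b :: real
  assumes "a \<ge> 0" and "b > 0"
  shows "Beta (a + 1) b \<le> 1 / b"
proof -
  have "Beta (a + 1) b \<le> Beta 1 b" using assms by (intro Beta_real_mono) auto
  also have "Beta 1 b = 1 / b"
  proof -
    have "b \<notin> \<int>\<^sub>\<le>\<^sub>0" using assms by (auto elim!: nonpos_Ints_cases)
    then have "Gamma (b + 1) = b * Gamma b" by (rule Gamma_plus1)
    moreover have "Gamma b \<noteq> 0" using Gamma_real_pos[of b] assms by linarith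
    ultimately show ?thesis by (simp add: Beta_def add.commute)
  qed
  finally show ?thesis .
qed

lemma Beta_real_plus1_le_powr:
  fixes a b :: real
  assumes a: "a \<ge> 1" and b: "b > 0"
  shows "Beta (a + 1) b \<le> a powr a / b powr (a + 1)"
proof -
  have "Beta (a + 1) b = Gamma (a + 1) * Gamma b / Gamma (b + (a + 1))"
    unfolding Beta_def by (simp add: add_ac)
  also have "\<dots> \<le> a powr a * Gamma b / (b powr (a + 1) * Gamma b)"
    using Gamma_real_plus1_le_powr[OF a] Gamma_real_plus_ge[of b "a + 1"] a b
    by (intro frac_le mult_right_mono mult_pos_pos) auto
  also have "\<dots> = a powr a / b powr (a + 1)" using Gamma_real_pos[OF b] by simp
  finally show ?thesis .
qed

lemma one_plus_le_two_powr:
  fixes x :: real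
  assumes x: "x \<ge> 1"
  shows "1 + x \<le> 2 powr x"
proof -
  have "1 + x \<le> 2 * (1 + (x - 1) * ln 2)"
    using ln2_ge_two_thirds mult_left_mono[of "1 / 2" "ln 2" "x - 1"] x by simp
  also have "\<dots> \<le> 2 * exp ((x - 1) * ln 2)"
    using exp_ge_add_one_self[of "(x - 1) * ln 2"] by (rule mult_left_mono) simp
  also have "\<dots> = 2 powr x"
    by (simp add: powr_def exp_diff left_diff_distrib)
  finally show ?thesis .
qed

lemma powr_bound_over_Beta_ge_exp:
  fixes a b :: real
  assumes a: "a \<ge> 1" and ab: "2 * a \<le> b"
  defines "u \<equiv> a / b"
  shows "exp (- 2 * a) \<le> (2 * u / (1 + 2 * u)) powr a * (1 + 2 * u) powr (- b) / (b * Beta (a + 1) b)"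
proof -
  have b: "b > 0" using a ab by linarith
  have u: "u > 0" "2 * u \<le> 1" "b * u = a" using a b ab by (auto simp: u_def field_simps)
  have "b * Beta (a + 1) b \<le> a powr a / b powr a"
    using Beta_real_plus1_le_powr[OF a b] b by (simp add: powr_add field_simps)
  also have "\<dots> = (a / b) powr a" using a b by (simp add: powr_divide)
  finally have B: "b * Beta (a + 1) b \<le> (a / b) powr a" .
  have one: "1 \<le> (2 / (1 + 2 * u)) powr a"
    using u a by (intro ge_one_powr_ge_zero) (auto simp: field_simps)
  have "exp (- 2 * a) = exp (2 * u) powr (- b)"
    using u by (simp add: powr_def)
  also have "\<dots> \<le> (1 + 2 * u) powr (- b)"
    using u b by (intro powr_mono2') (auto intro: exp_ge_add_one_self)
  also have "\<dots> \<le> (2 / (1 + 2 * u)) powr a * (1 + 2 * u) powr (- b)"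
    using mult_right_mono[OF one, of "(1 + 2 * u) powr (- b)"] by simp
  also have "2 / (1 + 2 * u) = (2 * u / (1 + 2 * u)) / (a / b)"
    using u a b unfolding u_def by simp
  also have "(\<dots>) powr a = (2 * u / (1 + 2 * u)) powr a / (a / b) powr a"
    using u a b by (intro powr_divide)
  also have "\<dots> * (1 + 2 * u) powr (- b)
      \<le> (2 * u / (1 + 2 * u)) powr a * (1 + 2 * u) powr (- b) / (b * Beta (a + 1) b)"
    using B a b u Beta_real_pos[of "a + 1" b]
    by (simp add: divide_left_mono mult_pos_pos flip: times_divide_eq_left)
  finally show ?thesis .
qed

lemma powr_bound_over_Beta_ge_two_powr:
  fixes a b :: real
  assumes a: "a \<ge> 1" and b: "b > 0" and ab: "b \<le> 2 * a"
  defines "u \<equiv> a / b"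
  shows "2 powr (- 3 * a) \<le> (2 * u / (1 + 2 * u)) powr a * (1 + 2 * u) powr (- b) / (b * Beta (a + 1) b)"
proof -
  have u: "u > 0" "2 * u \<ge> 1" "b * u = a" using a b ab by (auto simp: u_def field_simps)
  have B: "0 < b * Beta (a + 1) b" "b * Beta (a + 1) b \<le> 1"
    using Beta_real_pos[of "a + 1" b] Beta_real_plus1_le_inverse[of a b] a b by (auto simp: field_simps)
  have "(2 powr (2 * u)) powr (- b) = 2 powr (2 * u * - b)" by (rule powr_powr)
  also have "2 * u * - b = - 2 * a" using u by (simp add: algebra_simps)
  finally have "(2 powr (2 * u)) powr (- b) = 2 powr (- 2 * a)" .
  moreover have "(1 / 2) powr a = 2 powr (- a)" by (simp add: powr_minus_divide powr_divide)
  ultimately have "2 powr (- 3 * a) = (1 / 2) powr a * (2 powr (2 * u)) powr (- b)"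
    by (simp flip: powr_add)
  also have "\<dots> \<le> (2 * u / (1 + 2 * u)) powr a * (1 + 2 * u) powr (- b)"
  proof (rule mult_mono)
    show "(1 / 2) powr a \<le> (2 * u / (1 + 2 * u)) powr a"
      using u a by (intro powr_mono2) (auto simp: field_simps)
    show "(2 powr (2 * u)) powr (- b) \<le> (1 + 2 * u) powr (- b)"
      using u b one_plus_le_two_powr[of "2 * u"] by (intro powr_mono2') auto
  qed auto
  also have "\<dots> \<le> (2 * u / (1 + 2 * u)) powr a * (1 + 2 * u) powr (- b) / (b * Beta (a + 1) b)"
    using B u by (simp add: le_divide_eq)
  finally show ?thesis .
qed

lemma powr_bound_over_Beta_ge:
  fixes a b :: real
  assumes a: "a \<ge> 1" and b: "b > 0"
  defines "u \<equiv> a / b"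
  shows "exp (3 / 2 - 3 * a) / 2 \<le> (2 * u / (1 + 2 * u)) powr a * (1 + 2 * u) powr (- b) / (b * Beta (a + 1) b)"
proof (cases "2 * a \<le> b")
  case True
  have "3 / 2 - a \<le> ln 2" using a ln2_ge_two_thirds by simp
  then have "exp (3 / 2 - a) \<le> exp (ln 2)" by (simp only: exp_le_cancel_iff)
  moreover have "exp (3 / 2 - 3 * a) = exp (3 / 2 - a) * exp (- 2 * a)" by (simp flip: exp_add)
  ultimately have "exp (3 / 2 - 3 * a) \<le> 2 * exp (- 2 * a)"
    by (simp add: mult_right_mono)
  then show ?thesis
    using powr_bound_over_Beta_ge_exp[OF a True] unfolding u_def by linarith
next
  case False
  have "3 * (1 - ln 2) \<le> 3 * a * (1 - ln 2)"
    using a ln_2_less_1 by (intro mult_right_mono) auto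
  then have "3 / 2 - 3 * a \<le> ln 2 - 3 * a * ln 2"
    using ln2_le_25_over_36 by (simp add: algebra_simps)
  then have "exp (3 / 2 - 3 * a) \<le> exp (ln 2 - 3 * a * ln 2)" by (simp only: exp_le_cancel_iff)
  also have "exp (ln 2 - 3 * a * ln 2) = 2 * 2 powr (- 3 * a)"
    by (simp add: powr_def exp_diff exp_minus field_simps)
  finally have "exp (3 / 2 - 3 * a) \<le> 2 * 2 powr (- 3 * a)" .
  then show ?thesis
    using powr_bound_over_Beta_ge_two_powr[OF a b] False unfolding u_def by linarith
qed

lemma DKhi_self_ge:
  fixes D N :: nat
  assumes D: "D \<ge> 2" and N: "N \<ge> 1"
  shows "exp (3 / 2 - 3 / 2 * real D) / 4 \<le> DKhi D N (real D)"
proof -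
  define a b where "a = real D / 2" and "b = real N / 2"
  have a: "a \<ge> 1" and b: "b > 0" using D N by (auto simp: a_def b_def)
  define P where "P = (2 * (a / b) / (1 + 2 * (a / b))) powr a * (1 + 2 * (a / b)) powr (- b)"
  have exponent: "3 / 2 - 3 / 2 * real D = 3 / 2 - 3 * a" by (simp add: a_def)
  have "exp (3 / 2 - 3 / 2 * real D) / 4 \<le> P / (b * Beta (a + 1) b) / 2"
    using divide_right_mono[OF powr_bound_over_Beta_ge[OF a b], of 2] unfolding P_def exponent by simp
  also have "\<dots> = P / (2 * b) / Beta (a + 1) b" by simp
  also have "\<dots> \<le> excess_integral a b (a / b) / Beta (a + 1) b"
    using excess_integral_ge[OF a b, of "a / b"] a b Beta_real_pos[of "a + 1" b]
    unfolding P_def by (intro divide_right_mono) auto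
  also have "\<dots> = DKhi D N (real D)"
    using DKhi_eq_excess_integral[OF D N] D unfolding a_def b_def by simp
  finally show ?thesis .
qed

lemma binomial_ge_exp:
  fixes m d :: nat and c :: real
  assumes c: "c \<ge> 0" and d: "d \<ge> 1" and h: "real d \<le> exp (- c) * real m"
  shows "exp (c * real d) \<le> real (m choose d)"
proof -
  have "exp c * real d \<le> real m"
    using mult_left_mono[OF h, of "exp c"] by (simp add: mult.assoc[symmetric] flip: exp_add)
  then have ratio: "exp c \<le> real m / real d" using d by (simp add: field_simps)
  have "real d \<le> exp c * real d" using c mult_right_mono[of 1 "exp c" "real d"] by simp
  then have "d \<le> m" using \<open>exp c * real d \<le> real m\<close> by simp
  have "exp (c * real d) = exp c ^ d" by (simp add: exp_of_nat_mult[symmetric] mult.commute)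
  also have "\<dots> \<le> (real m / real d) ^ d" using ratio by (intro power_mono) auto
  also have "\<dots> \<le> real (m choose d)" by (rule binomial_ge_n_over_k_pow_k[OF \<open>d \<le> m\<close>])
  finally show ?thesis .
qed

theorem lemma3:
  fixes n p d :: nat
  assumes "n \<ge> 1" and "p \<ge> 1" and "d \<ge> 1"
    and "real d \<le> exp (- 3 / 2) * (real p - 1)"
    and "int n - int d - 1 \<ge> 1"
  shows "EDKhi (d + 1) (n - d - 1) (1 / (real ((p - 1) choose d) * (real d + 1) ^ 2)) \<ge> real d + 1"
proof -
  have D: "d + 1 \<ge> 2" and N: "n - d - 1 \<ge> 1" using assms(3,5) by auto
  have C: "exp (3 / 2 * real d) \<le> real ((p - 1) choose d)"
    using assms(2-4) by (intro binomial_ge_exp) (auto simp: of_nat_diff)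
  have Cpos: "real ((p - 1) choose d) > 0" using C exp_gt_zero[of "3 / 2 * real d"] by linarith
  have "(2::real) ^ 2 \<le> (real d + 1) ^ 2" using assms(3) by (intro power_mono) auto
  then have "1 / (real ((p - 1) choose d) * (real d + 1) ^ 2) \<le> 1 / (exp (3 / 2 * real d) * 4)"
    using C Cpos by (intro divide_left_mono mult_mono mult_pos_pos) auto
  also have "\<dots> = exp (3 / 2 - 3 / 2 * real (d + 1)) / 4"
    by (simp add: exp_minus field_simps)
  also have "\<dots> \<le> DKhi (d + 1) (n - d - 1) (real (d + 1))"
    by (rule DKhi_self_ge[OF D N])
  finally have "real (d + 1) \<le> EDKhi (d + 1) (n - d - 1) (1 / (real ((p - 1) choose d) * (real d + 1) ^ 2))"
    using Cpos by (intro EDKhi_ge[OF D N]) auto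
  then show ?thesis by simp
qed

end
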